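(* Let $\mathbb{K}$ be a field, let $\{i,j,k\}=\{1,2,3\}$, let $R=\mathbb{K}[x_i,x_j,x_k]$ with homogeneous maximal ideal $\mathfrak{m}=\langle x_i,x_j,x_k\rangle$, and let $I\subseteq R$ be a support-$2$ monomial ideal such that $G(I)$ is the $3$-cycle on $x_i,x_j,x_k$. Then: (a) if $\alpha_{i,j}\ge 2$ and $\alpha_{j,k}\ge 2$, then $\mathfrak{m}\in\mathrm{Ass}(I)$; (b) if $\alpha_{i,k}=\alpha_{j,k}=1$ and $\alpha_{i,j}\ge 2$, then $\mathfrak{m}\notin\mathrm{Ass}(I)$ if and only if $w^1_{i,k}\ge\mu_{i,j}$ and $w^1_{j,k}\ge\mu_{j,i}$.
   Context: For a monomial ideal $I$, $\mathcal{G}(I)$ denotes its minimal set of monomial generators. $I$ is a support-$2$ monomial ideal if every element of $\mathcal{G}(I)$ has the form $x_a^{p}x_b^{q}$ with $a\neq b$ and $p,q\ge 1$. The underlying simple graph $G(I)$ has an edge $\{x_a,x_b\}$ whenever some element of $\mathcal{G}(I)$ has support $\{x_a,x_b\}$. For an edge $\{x_a,x_b\}$, $\alpha_{a,b}=\alpha_{b,a}$ is the number of elements of $\mathcal{G}(I)$ with support exactly $\{x_a,x_b\}$, and $\mu_{a,b}$ is the maximum exponent of $x_a$ among them. When $\alpha_{a,b}=1$, $w^1_{a,b}$ denotes the exponent of $x_a$ in the unique element of $\mathcal{G}(I)$ with support $\{x_a,x_b\}$. $\mathrm{Ass}(I)$ is the set of associated primes of $R/I$. *)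

theory Defs
  imports Main "HOL-Library.Poly_Mapping"
begin

text \<open>Polynomial ring K[x_v : v in 'v] represented as finitely supported maps from
exponent vectors ('v =>0 nat) to coefficients.\<close>

type_synonym ('v, 'k) mpoly = "('v \<Rightarrow>\<^sub>0 nat) \<Rightarrow>\<^sub>0 'k"

definition monom :: "('v \<Rightarrow>\<^sub>0 nat) \<Rightarrow> ('v, 'k::field) mpoly" where
  "monom e = Poly_Mapping.single e 1"

definition var :: "'v \<Rightarrow> ('v, 'k::field) mpoly" where
  "var a = monom (Poly_Mapping.single a 1)"

definition gen_ideal :: "'a::comm_ring_1 set \<Rightarrow> 'a set" where
  "gen_ideal S = {(\<Sum>s\<in>F. c s * s) | F c. finite F \<and> F \<subseteq> S}"

definition is_ideal :: "'a::comm_ring_1 set \<Rightarrow> bool" where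
  "is_ideal I \<longleftrightarrow> 0 \<in> I \<and> (\<forall>a\<in>I. \<forall>b\<in>I. a + b \<in> I) \<and> (\<forall>r. \<forall>a\<in>I. r * a \<in> I)"

definition prime_ideal :: "'a::comm_ring_1 set \<Rightarrow> bool" where
  "prime_ideal P \<longleftrightarrow> is_ideal P \<and> P \<noteq> UNIV \<and> (\<forall>a b. a * b \<in> P \<longrightarrow> a \<in> P \<or> b \<in> P)"

text \<open>Associated primes of R/I: prime ideals of the form (I : f).\<close>
definition Ass :: "'a::comm_ring_1 set \<Rightarrow> 'a set set" where
  "Ass I = {P. prime_ideal P \<and> (\<exists>f. P = {g. g * f \<in> I})}"

definition mdvd :: "('v \<Rightarrow>\<^sub>0 nat) \<Rightarrow> ('v \<Rightarrow>\<^sub>0 nat) \<Rightarrow> bool" where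
  "mdvd e f \<longleftrightarrow> (\<forall>v. Poly_Mapping.lookup e v \<le> Poly_Mapping.lookup f v)"

text \<open>G is the minimal monomial generating set of the monomial ideal it generates:
a finite antichain under divisibility.\<close>
definition minimal_gens :: "('v \<Rightarrow>\<^sub>0 nat) set \<Rightarrow> bool" where
  "minimal_gens G \<longleftrightarrow> finite G \<and> (\<forall>e\<in>G. \<forall>f\<in>G. mdvd e f \<longrightarrow> e = f)"

definition support2 :: "('v \<Rightarrow>\<^sub>0 nat) set \<Rightarrow> bool" where
  "support2 G \<longleftrightarrow> (\<forall>e\<in>G. card (Poly_Mapping.keys e) = 2)"

definition monomial_ideal :: "('v \<Rightarrow>\<^sub>0 nat) set \<Rightarrow> ('v, 'k::field) mpoly set" where
  "monomial_ideal G = gen_ideal (monom ` G)"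

definition edges :: "('v \<Rightarrow>\<^sub>0 nat) set \<Rightarrow> 'v set set" where
  "edges G = Poly_Mapping.keys ` G"

definition alpha :: "('v \<Rightarrow>\<^sub>0 nat) set \<Rightarrow> 'v \<Rightarrow> 'v \<Rightarrow> nat" where
  "alpha G a b = card {e\<in>G. Poly_Mapping.keys e = {a, b}}"

definition mu :: "('v \<Rightarrow>\<^sub>0 nat) set \<Rightarrow> 'v \<Rightarrow> 'v \<Rightarrow> nat" where
  "mu G a b = Max {Poly_Mapping.lookup e a | e. e \<in> G \<and> Poly_Mapping.keys e = {a, b}}"

definition w1 :: "('v \<Rightarrow>\<^sub>0 nat) set \<Rightarrow> 'v \<Rightarrow> 'v \<Rightarrow> nat" where
  "w1 G a b = Poly_Mapping.lookup (THE e. e \<in> G \<and> Poly_Mapping.keys e = {a, b}) a"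

definition max_ideal :: "'v set \<Rightarrow> ('v, 'k::field) mpoly set" where
  "max_ideal V = gen_ideal (var ` V)"

end

theory Submission
  imports Defs
begin

text \<open>The maximal ideal \<open>m\<close> is associated to a monomial ideal \<open>I\<close> iff some monomial
  \<open>x\<^sup>u\<close> lies in \<open>(I : m)\<close> but not in \<open>I\<close>; with finitely many variables it suffices that
  \<open>x\<^sup>u \<notin> I\<close> while every ray \<open>x\<^sup>u x\<^sub>v\<^sup>n\<close> eventually enters \<open>I\<close>.
  If \<open>g\<close> is the generator on an edge \<open>{x, y}\<close> with the largest \<open>y\<close>-exponent \<open>\<mu>\<^sub>y\<^sub>,\<^sub>x\<close>,
  then \<open>g / x\<^sub>y\<close> is such a monomial as soon as there is a second generator on \<open>{x, y}\<close>
  and a generator on \<open>{y, z}\<close> with \<open>y\<close>-exponent below \<open>\<mu>\<^sub>y\<^sub>,\<^sub>x\<close>. This gives (a) and,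
  by contraposition, one direction of (b). Conversely, under the hypotheses of (b) the
  \<open>i\<close>- and \<open>j\<close>-rays of a witness force its \<open>i\<close>- and \<open>j\<close>-exponents below those of the
  unique generators on \<open>{i, k}\<close> and \<open>{j, k}\<close>, whereas its \<open>k\<close>-ray must enter \<open>I\<close>
  through one of these two generators.\<close>

section \<open>Generated ideals\<close>

lemma is_ideal_gen_ideal: "is_ideal (gen_ideal S)"
  unfolding is_ideal_def
proof (intro conjI ballI allI)
  show "0 \<in> gen_ideal S"
    unfolding gen_ideal_def by (rule CollectI, rule exI[of _ "{}"]) auto
next
  fix a b assume "a \<in> gen_ideal S" "b \<in> gen_ideal S"
  then obtain F1 c1 F2 c2 where a: "a = (\<Sum>s\<in>F1. c1 s * s)" "finite F1" "F1 \<subseteq> S"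
    and b: "b = (\<Sum>s\<in>F2. c2 s * s)" "finite F2" "F2 \<subseteq> S"
    unfolding gen_ideal_def by blast
  define c where "c s = (if s \<in> F1 then c1 s else 0) + (if s \<in> F2 then c2 s else 0)" for s
  have "(\<Sum>s\<in>F1 \<union> F2. c s * s) = (\<Sum>s\<in>F1 \<union> F2. if s \<in> F1 then c1 s * s else 0)
      + (\<Sum>s\<in>F1 \<union> F2. if s \<in> F2 then c2 s * s else 0)"
    unfolding sum.distrib[symmetric] by (rule sum.cong) (auto simp: c_def distrib_right)
  also have "\<dots> = a + b"
    using a b by (simp add: sum.If_cases Int_absorb1 Int_absorb2)
  finally show "a + b \<in> gen_ideal S"
    unfolding gen_ideal_def using a b by (intro CollectI exI[of _ "F1 \<union> F2"] exI[of _ c]) auto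
next
  fix r a assume "a \<in> gen_ideal S"
  then obtain F c where a: "a = (\<Sum>s\<in>F. c s * s)" "finite F" "F \<subseteq> S"
    unfolding gen_ideal_def by blast
  then have "r * a = (\<Sum>s\<in>F. (r * c s) * s)" by (simp add: sum_distrib_left mult.assoc)
  then show "r * a \<in> gen_ideal S"
    unfolding gen_ideal_def using a by (intro CollectI exI[of _ F] exI[of _ "\<lambda>s. r * c s"]) auto
qed

lemma gen_ideal_base: "s \<in> S \<Longrightarrow> s \<in> gen_ideal S"
  unfolding gen_ideal_def by (rule CollectI, rule exI[of _ "{s}"], rule exI[of _ "\<lambda>_. 1"]) auto

lemma ideal_sum_mem:
  assumes "is_ideal J" "finite A" "\<And>x. x \<in> A \<Longrightarrow> f x \<in> J"
  shows "sum f A \<in> J"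
  using assms(2,3) by (induction A rule: finite_induct) (use assms(1) in \<open>auto simp: is_ideal_def\<close>)

lemma gen_ideal_minimal:
  assumes "is_ideal J" "S \<subseteq> J"
  shows "gen_ideal S \<subseteq> J"
proof
  fix x assume "x \<in> gen_ideal S"
  then obtain F c where "x = (\<Sum>s\<in>F. c s * s)" "finite F" "F \<subseteq> S"
    unfolding gen_ideal_def by blast
  then show "x \<in> J"
    using assms by (auto intro!: ideal_sum_mem simp: is_ideal_def)
qed

section \<open>Monomial ideals and the associated maximal ideal\<close>

definition gens_dvd :: "('v \<Rightarrow>\<^sub>0 nat) set \<Rightarrow> ('v \<Rightarrow>\<^sub>0 nat) \<Rightarrow> bool" where
  "gens_dvd G u \<longleftrightarrow> (\<exists>g\<in>G. mdvd g u)"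

text \<open>\<open>x\<^sup>u \<in> (I : m) - I\<close> for the ideal \<open>I\<close> generated by \<open>G\<close> and the maximal ideal \<open>m\<close>.\<close>
definition socle_witness :: "('v \<Rightarrow>\<^sub>0 nat) set \<Rightarrow> ('v \<Rightarrow>\<^sub>0 nat) \<Rightarrow> bool" where
  "socle_witness G u \<longleftrightarrow> \<not> gens_dvd G u \<and> (\<forall>v. gens_dvd G (u + Poly_Mapping.single v 1))"

lemma mdvd_refl: "mdvd a a"
  unfolding mdvd_def by simp

lemma mdvd_trans: "mdvd a b \<Longrightarrow> mdvd b c \<Longrightarrow> mdvd a c"
  unfolding mdvd_def using le_trans by blast

lemma mdvd_add_left: "mdvd a b \<Longrightarrow> mdvd a (c + b)"
  unfolding mdvd_def by (simp add: lookup_add trans_le_add2)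

lemma mdvd_add_mono: "mdvd a b \<Longrightarrow> mdvd (a + c) (b + c)"
  unfolding mdvd_def by (simp add: lookup_add)

lemma mdvd_iff_keys:
  "mdvd h u \<longleftrightarrow> (\<forall>v\<in>Poly_Mapping.keys h. Poly_Mapping.lookup h v \<le> Poly_Mapping.lookup u v)"
  unfolding mdvd_def by (metis in_keys_iff le0)

lemma gens_dvd_mono: "gens_dvd G a \<Longrightarrow> mdvd a b \<Longrightarrow> gens_dvd G b"
  unfolding gens_dvd_def using mdvd_trans by blast

lemma poly_mapping_sum_single:
  "p = (\<Sum>e\<in>Poly_Mapping.keys p. Poly_Mapping.single e (Poly_Mapping.lookup p e))"
  by (rule poly_mapping_eqI) (simp add: lookup_sum lookup_single when_def sum.delta in_keys_iff)

lemma mem_monomial_ideal_iff: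
  "(p :: ('v, 'k::field) mpoly) \<in> monomial_ideal G \<longleftrightarrow> (\<forall>e\<in>Poly_Mapping.keys p. gens_dvd G e)"
proof
  let ?J = "{p :: ('v, 'k) mpoly. \<forall>e\<in>Poly_Mapping.keys p. gens_dvd G e}"
  have "is_ideal ?J"
    unfolding is_ideal_def
  proof (intro conjI ballI allI)
    fix r a assume a: "a \<in> ?J"
    show "r * a \<in> ?J"
    proof (intro CollectI ballI)
      fix e assume "e \<in> Poly_Mapping.keys (r * a)"
      then obtain x y where "e = x + y" "y \<in> Poly_Mapping.keys a" using keys_mult by blast
      then show "gens_dvd G e" using a gens_dvd_mono mdvd_add_left mdvd_refl by blast
    qed
  qed (auto dest: keys_add[THEN subsetD])
  moreover have "monom ` G \<subseteq> ?J"
    using mdvd_refl by (fastforce simp: monom_def gens_dvd_def)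
  ultimately have "monomial_ideal G \<subseteq> ?J"
    unfolding monomial_ideal_def by (rule gen_ideal_minimal)
  then show "p \<in> monomial_ideal G \<Longrightarrow> \<forall>e\<in>Poly_Mapping.keys p. gens_dvd G e" by blast
next
  assume dvd: "\<forall>e\<in>Poly_Mapping.keys p. gens_dvd G e"
  have "Poly_Mapping.single e (Poly_Mapping.lookup p e) \<in> gen_ideal (monom ` G)"
    if e: "e \<in> Poly_Mapping.keys p" for e
  proof -
    obtain h where h: "h \<in> G" "mdvd h e" using dvd e unfolding gens_dvd_def by blast
    then have "e = (e - h) + h"
      unfolding mdvd_def by (intro poly_mapping_eqI) (simp add: lookup_add lookup_minus)
    then have "Poly_Mapping.single e (Poly_Mapping.lookup p e)
        = Poly_Mapping.single (e - h) (Poly_Mapping.lookup p e) * monom h"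
      unfolding monom_def by (simp add: mult_single)
    moreover have "monom h \<in> gen_ideal (monom ` G)" using h(1) by (intro gen_ideal_base) auto
    ultimately show ?thesis
      using is_ideal_gen_ideal unfolding is_ideal_def by metis
  qed
  then have "(\<Sum>e\<in>Poly_Mapping.keys p. Poly_Mapping.single e (Poly_Mapping.lookup p e))
      \<in> monomial_ideal G"
    unfolding monomial_ideal_def by (intro ideal_sum_mem[OF is_ideal_gen_ideal]) auto
  then show "p \<in> monomial_ideal G" using poly_mapping_sum_single[of p] by simp
qed

lemma lookup_mult_monom:
  "Poly_Mapping.lookup ((g :: ('v, 'k::field) mpoly) * monom u) (e + u) = Poly_Mapping.lookup g e"
proof -
  have "g * monom u
      = (\<Sum>x\<in>Poly_Mapping.keys g. Poly_Mapping.single (x + u) (Poly_Mapping.lookup g x))"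
    by (subst poly_mapping_sum_single[of g]) (simp add: sum_distrib_right monom_def mult_single)
  then show ?thesis
    by (simp add: lookup_sum lookup_single when_def sum.delta in_keys_iff)
qed

lemma keys_mult_monom:
  "Poly_Mapping.keys ((g :: ('v, 'k::field) mpoly) * monom u) = (\<lambda>e. e + u) ` Poly_Mapping.keys g"
proof
  show "Poly_Mapping.keys (g * monom u) \<subseteq> (\<lambda>e. e + u) ` Poly_Mapping.keys g"
    using keys_mult[of g "monom u"] by (auto simp: monom_def)
  show "(\<lambda>e. e + u) ` Poly_Mapping.keys g \<subseteq> Poly_Mapping.keys (g * monom u)"
    using lookup_mult_monom[of g u] by (auto simp: in_keys_iff)
qed

lemma poly_mapping_add_eq_0_iff: "(l :: 'v \<Rightarrow>\<^sub>0 nat) + q = 0 \<longleftrightarrow> l = 0 \<and> q = 0"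
  by (metis add_is_0 lookup_add lookup_zero poly_mapping_eqI add_0)

lemma lookup_mult_zero:
  "Poly_Mapping.lookup ((a :: ('v, 'k::field) mpoly) * b) 0
    = Poly_Mapping.lookup a 0 * Poly_Mapping.lookup b 0"
proof -
  have "(\<lambda>q. Poly_Mapping.lookup b q when 0 = l + q)
      = (\<lambda>q. (Poly_Mapping.lookup b 0 when l = 0) when q = 0)" for l :: "'v \<Rightarrow>\<^sub>0 nat"
    by (rule ext) (auto simp: when_def poly_mapping_add_eq_0_iff eq_commute[of 0])
  then have "(\<lambda>l. Poly_Mapping.lookup a l * (\<Sum>q. Poly_Mapping.lookup b q when 0 = l + q))
      = (\<lambda>l. Poly_Mapping.lookup a 0 * Poly_Mapping.lookup b 0 when l = 0)"
    by (simp only: Sum_any_when_equal) (auto simp: when_def)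
  then show ?thesis
    by (simp only: lookup_mult Sum_any_when_equal)
qed

lemma mem_max_ideal_iff:
  "(p :: ('v, 'k::field) mpoly) \<in> max_ideal UNIV \<longleftrightarrow> Poly_Mapping.lookup p 0 = 0"
proof -
  let ?X = "range (\<lambda>v. Poly_Mapping.single v (1::nat))"
  have "max_ideal UNIV = (monomial_ideal ?X :: ('v, 'k) mpoly set)"
    unfolding max_ideal_def monomial_ideal_def var_def by (simp add: image_image)
  moreover have "gens_dvd ?X e \<longleftrightarrow> e \<noteq> 0" for e :: "'v \<Rightarrow>\<^sub>0 nat"
  proof
    assume "gens_dvd ?X e"
    then obtain v where "mdvd (Poly_Mapping.single v 1) e" unfolding gens_dvd_def by blast
    then have "Poly_Mapping.lookup e v \<ge> 1" unfolding mdvd_def by (metis lookup_single_eq)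
    then show "e \<noteq> 0" by auto
  next
    assume "e \<noteq> 0"
    then obtain v where "v \<in> Poly_Mapping.keys e" by (metis keys_eq_empty ex_in_conv)
    then have "mdvd (Poly_Mapping.single v 1) e"
      by (simp add: mdvd_iff_keys in_keys_iff Suc_leI)
    then show "gens_dvd ?X e" unfolding gens_dvd_def by blast
  qed
  ultimately show ?thesis
    by (auto simp: mem_monomial_ideal_iff in_keys_iff)
qed

lemma prime_ideal_max_ideal: "prime_ideal (max_ideal UNIV :: ('v, 'k::field) mpoly set)"
  unfolding prime_ideal_def
proof (intro conjI allI impI)
  show "is_ideal (max_ideal UNIV :: ('v, 'k) mpoly set)"
    unfolding max_ideal_def by (rule is_ideal_gen_ideal)
  show "max_ideal UNIV \<noteq> (UNIV :: ('v, 'k) mpoly set)"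
    using mem_max_ideal_iff[of "1 :: ('v, 'k) mpoly"] by (auto simp: lookup_one)
qed (simp add: mem_max_ideal_iff lookup_mult_zero)

lemma max_ideal_eq_colon_socle_witness:
  assumes "socle_witness G u"
  shows "max_ideal UNIV = {g. g * monom u \<in> (monomial_ideal G :: ('v, 'k::field) mpoly set)}"
proof -
  from assms have u: "\<not> gens_dvd G u" "\<And>v. gens_dvd G (u + Poly_Mapping.single v 1)"
    unfolding socle_witness_def by blast+
  have "g * monom u \<in> monomial_ideal G \<longleftrightarrow> Poly_Mapping.lookup g 0 = 0"
    for g :: "('v, 'k) mpoly"
  proof
    assume "g * monom u \<in> monomial_ideal G"
    then have "\<forall>e\<in>Poly_Mapping.keys g. gens_dvd G (e + u)"
      unfolding mem_monomial_ideal_iff keys_mult_monom by blast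
    then have "0 \<notin> Poly_Mapping.keys g" using u(1) by force
    then show "Poly_Mapping.lookup g 0 = 0" by (simp add: in_keys_iff)
  next
    assume g0: "Poly_Mapping.lookup g 0 = 0"
    have "gens_dvd G (e + u)" if "e \<in> Poly_Mapping.keys g" for e
    proof -
      have "e \<noteq> 0" using that g0 by (auto simp: in_keys_iff)
      then obtain v where "v \<in> Poly_Mapping.keys e" by (metis keys_eq_empty ex_in_conv)
      then have "mdvd (u + Poly_Mapping.single v 1) (e + u)"
        by (auto simp: mdvd_def lookup_single when_def in_keys_iff lookup_add)
      then show ?thesis using u(2) gens_dvd_mono by blast
    qed
    then show "g * monom u \<in> monomial_ideal G"
      unfolding mem_monomial_ideal_iff keys_mult_monom by blast
  qed
  then show ?thesis
    by (intro set_eqI) (simp only: mem_Collect_eq mem_max_ideal_iff)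
qed

lemma max_ideal_in_Ass_iff:
  "max_ideal UNIV \<in> Ass (monomial_ideal G :: ('v, 'k::field) mpoly set)
    \<longleftrightarrow> (\<exists>u. socle_witness G u)"
proof
  assume "max_ideal UNIV \<in> Ass (monomial_ideal G :: ('v, 'k) mpoly set)"
  then obtain f :: "('v, 'k) mpoly" where f: "max_ideal UNIV = {g. g * f \<in> monomial_ideal G}"
    unfolding Ass_def by blast
  have "(1 :: ('v, 'k) mpoly) \<notin> max_ideal UNIV" by (simp add: mem_max_ideal_iff lookup_one)
  then have "f \<notin> monomial_ideal G" using f by auto
  then obtain u where u: "u \<in> Poly_Mapping.keys f" "\<not> gens_dvd G u"
    unfolding mem_monomial_ideal_iff by blast
  have "gens_dvd G (u + Poly_Mapping.single v 1)" for v
  proof -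
    have "Poly_Mapping.single v (1::nat) \<noteq> 0"
      by (metis lookup_single_eq lookup_zero one_neq_zero)
    then have "(var v :: ('v, 'k) mpoly) \<in> max_ideal UNIV"
      by (simp add: mem_max_ideal_iff var_def monom_def lookup_single when_def)
    then have "f * monom (Poly_Mapping.single v 1) \<in> monomial_ideal G"
      using f by (simp add: var_def mult.commute)
    then show ?thesis unfolding mem_monomial_ideal_iff keys_mult_monom using u(1) by blast
  qed
  then show "\<exists>u. socle_witness G u" using u(2) unfolding socle_witness_def by blast
next
  assume "\<exists>u. socle_witness G u"
  then obtain u where "socle_witness G u" ..
  from max_ideal_eq_colon_socle_witness[OF this] show
    "max_ideal UNIV \<in> Ass (monomial_ideal G :: ('v, 'k) mpoly set)"
    unfolding Ass_def by (intro CollectI conjI prime_ideal_max_ideal exI)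
qed

text \<open>Raise the exponents one variable at a time, each to one below the point where its ray
  enters the ideal; raising later exponents keeps the earlier rays inside the ideal.\<close>
lemma ex_socle_witness_if_rays:
  assumes "finite (UNIV :: 'v set)" and u: "\<not> gens_dvd G (u :: 'v \<Rightarrow>\<^sub>0 nat)"
    and rays: "\<And>v. \<exists>n. gens_dvd G (u + Poly_Mapping.single v n)"
  shows "\<exists>w. socle_witness G w"
proof -
  have "\<exists>w. \<not> gens_dvd G w \<and> mdvd u w \<and> (\<forall>v\<in>V. gens_dvd G (w + Poly_Mapping.single v 1))"
    if "finite V" for V :: "'v set"
    using that
  proof (induction V rule: finite_induct)
    case empty
    then show ?case using u mdvd_refl by blast
  next
    case (insert v V)
    then obtain w where w: "\<not> gens_dvd G w" "mdvd u w"
      "\<forall>x\<in>V. gens_dvd G (w + Poly_Mapping.single x 1)"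
      by blast
    obtain n where "gens_dvd G (u + Poly_Mapping.single v n)" using rays by blast
    then have ex: "gens_dvd G (w + Poly_Mapping.single v n)"
      using gens_dvd_mono mdvd_add_mono[OF w(2)] by blast
    define n0 where "n0 = (LEAST n. gens_dvd G (w + Poly_Mapping.single v n))"
    have n0: "gens_dvd G (w + Poly_Mapping.single v n0)"
      unfolding n0_def using ex by (rule LeastI)
    then have "n0 \<noteq> 0" using w(1) by (metis add.right_neutral single_zero)
    define w' where "w' = w + Poly_Mapping.single v (n0 - 1)"
    have "\<not> gens_dvd G w'"
      unfolding w'_def n0_def by (rule not_less_Least) (use \<open>n0 \<noteq> 0\<close> n0_def in simp)
    moreover have "w' + Poly_Mapping.single v 1 = w + Poly_Mapping.single v n0"
      unfolding w'_def using \<open>n0 \<noteq> 0\<close> by (simp add: add.assoc flip: single_add)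
    moreover have "mdvd w w'" "mdvd u w'"
      unfolding w'_def using w(2) by (auto simp: mdvd_def lookup_add intro: le_trans)
    moreover have "gens_dvd G (w' + Poly_Mapping.single x 1)" if "x \<in> V" for x
      using w(3) that gens_dvd_mono mdvd_add_mono[OF \<open>mdvd w w'\<close>] by blast
    ultimately show ?case using n0 by auto
  qed
  from this[OF assms(1)] show ?thesis unfolding socle_witness_def by blast
qed

lemma gens_dvd_ray:
  assumes "h \<in> G" "\<And>w. w \<noteq> v \<Longrightarrow> Poly_Mapping.lookup h w \<le> Poly_Mapping.lookup u w"
  shows "gens_dvd G (u + Poly_Mapping.single v (Poly_Mapping.lookup h v))"
proof -
  have "mdvd h (u + Poly_Mapping.single v (Poly_Mapping.lookup h v))"
    using assms(2) by (auto simp: mdvd_def lookup_add lookup_single when_def)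
  then show ?thesis using assms(1) unfolding gens_dvd_def by blast
qed

lemma not_gens_dvd_proper_divisor:
  assumes "minimal_gens G" "g \<in> G" "mdvd u g" "u \<noteq> g"
  shows "\<not> gens_dvd G u"
  using assms mdvd_trans unfolding minimal_gens_def gens_dvd_def mdvd_def
  by (metis le_antisym poly_mapping_eqI)

text \<open>The ray of \<open>g / x\<^sub>y\<close> in direction \<open>y\<close> reaches \<open>g\<close> itself, so only the other
  directions need a hypothesis.\<close>
lemma max_ideal_in_Ass_below_generator:
  assumes "finite (UNIV :: 'v set)" "minimal_gens G" "g \<in> G" "y \<in> Poly_Mapping.keys g"
    and others: "\<And>v. v \<noteq> y \<Longrightarrow> \<exists>h\<in>G. \<forall>w. w \<noteq> v \<longrightarrow>
        Poly_Mapping.lookup h w \<le> Poly_Mapping.lookup (g - Poly_Mapping.single y 1) w"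
  shows "max_ideal UNIV \<in> Ass (monomial_ideal G :: ('v, 'k::field) mpoly set)"
proof -
  let ?u = "g - Poly_Mapping.single y 1"
  have "mdvd ?u g" by (simp add: mdvd_def lookup_minus)
  moreover have "Poly_Mapping.lookup ?u y \<noteq> Poly_Mapping.lookup g y"
    using assms(4) by (simp add: lookup_minus in_keys_iff)
  then have "?u \<noteq> g" by metis
  ultimately have "\<not> gens_dvd G ?u" using not_gens_dvd_proper_divisor assms(2,3) by blast
  moreover have "\<exists>n. gens_dvd G (?u + Poly_Mapping.single v n)" for v
  proof (cases "v = y")
    case True
    have "gens_dvd G (?u + Poly_Mapping.single y (Poly_Mapping.lookup g y))"
      by (rule gens_dvd_ray[OF assms(3)]) (simp add: lookup_minus lookup_single)
    then show ?thesis using True by blast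
  next
    case False
    then show ?thesis using others gens_dvd_ray by metis
  qed
  ultimately show ?thesis
    using ex_socle_witness_if_rays[OF assms(1)] max_ideal_in_Ass_iff by blast
qed

section \<open>Monomial ideals on a triangle\<close>

lemma alpha_commute: "alpha G a b = alpha G b a"
  unfolding alpha_def by (simp add: insert_commute)

lemma lookup_le_mu:
  assumes "finite G" "e \<in> G" "Poly_Mapping.keys e = {x, y}"
  shows "Poly_Mapping.lookup e x \<le> mu G x y"
  unfolding mu_def using assms by (intro Max_ge) auto

lemma alpha_eq_1E:
  assumes "alpha G a b = 1"
  obtains f where "f \<in> G" "Poly_Mapping.keys f = {a, b}"
    "\<And>e. e \<in> G \<Longrightarrow> Poly_Mapping.keys e = {a, b} \<Longrightarrow> e = f"
    "w1 G a b = Poly_Mapping.lookup f a"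
proof -
  obtain f where f: "{e\<in>G. Poly_Mapping.keys e = {a, b}} = {f}"
    using assms unfolding alpha_def by (rule card_1_singletonE)
  then have "(THE e. e \<in> G \<and> Poly_Mapping.keys e = {a, b}) = f"
    by (intro the_equality) blast+
  then show ?thesis using f that unfolding w1_def by blast
qed

text \<open>Two generators with the same support \<open>{x, y}\<close> and the same \<open>y\<close>-exponent are
  comparable, hence equal.\<close>
lemma alpha_ge_2E:
  assumes "minimal_gens G" "alpha G x y \<ge> 2"
  obtains g g' where "g \<in> G" "Poly_Mapping.keys g = {x, y}" "Poly_Mapping.lookup g y = mu G y x"
    "g' \<in> G" "Poly_Mapping.keys g' = {x, y}" "Poly_Mapping.lookup g' y < mu G y x"
proof -
  let ?E = "{e\<in>G. Poly_Mapping.keys e = {x, y}}"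
  have fin: "finite G" and anti: "\<And>e f. e \<in> G \<Longrightarrow> f \<in> G \<Longrightarrow> mdvd e f \<Longrightarrow> e = f"
    using assms(1) unfolding minimal_gens_def by blast+
  have mu: "mu G y x = Max ((\<lambda>e. Poly_Mapping.lookup e y) ` ?E)"
    unfolding mu_def by (rule arg_cong[where f = Max]) (auto simp: insert_commute)
  have card: "card ?E \<ge> 2" using assms(2) unfolding alpha_def .
  then have "?E \<noteq> {}" by (metis card.empty not_numeral_le_zero)
  then have "mu G y x \<in> (\<lambda>e. Poly_Mapping.lookup e y) ` ?E"
    unfolding mu using fin by (intro Max_in) auto
  then obtain g where g: "g \<in> ?E" "Poly_Mapping.lookup g y = mu G y x" by auto
  have "\<not> ?E \<subseteq> {g}"
  proof
    assume "?E \<subseteq> {g}"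
    then have "card ?E \<le> card {g}" by (intro card_mono) simp_all
    then show False using card by simp
  qed
  then obtain g' where g': "g' \<in> ?E" "g' \<noteq> g" by blast
  have "Poly_Mapping.lookup g' y \<le> mu G y x"
    unfolding mu using fin g'(1) by (intro Max_ge) auto
  moreover have "Poly_Mapping.lookup g' y \<noteq> Poly_Mapping.lookup g y"
  proof
    assume "Poly_Mapping.lookup g' y = Poly_Mapping.lookup g y"
    then have "mdvd g' g \<or> mdvd g g'"
      using g(1) g'(1) by (auto simp: mdvd_iff_keys)
    then show False using anti g(1) g'(1,2) by blast
  qed
  ultimately have "Poly_Mapping.lookup g' y < mu G y x" using g(2) by linarith
  then show ?thesis using that g g' by blast
qed

lemma max_ideal_in_Ass_if_low_neighbour:
  assumes vars: "(UNIV :: 'v set) = {x, y, z}" and "x \<noteq> y" "y \<noteq> z" "x \<noteq> z"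
    and "minimal_gens G" "alpha G x y \<ge> 2"
    and h: "h \<in> G" "Poly_Mapping.keys h = {y, z}" "Poly_Mapping.lookup h y < mu G y x"
  shows "max_ideal UNIV \<in> Ass (monomial_ideal G :: ('v, 'k::field) mpoly set)"
proof -
  obtain g g' where g: "g \<in> G" "Poly_Mapping.keys g = {x, y}" "Poly_Mapping.lookup g y = mu G y x"
    and g': "g' \<in> G" "Poly_Mapping.keys g' = {x, y}" "Poly_Mapping.lookup g' y < mu G y x"
    using alpha_ge_2E[OF assms(5,6)] .
  have all_vars: "(\<forall>w. P w) \<longleftrightarrow> P x \<and> P y \<and> P z" for P
    using vars by (metis UNIV_I empty_iff insert_iff)
  show ?thesis
  proof (rule max_ideal_in_Ass_below_generator[OF _ assms(5) g(1)])
    show "finite (UNIV :: 'v set)" by (simp add: vars)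
    show "y \<in> Poly_Mapping.keys g" using g(2) by simp
    fix v assume "v \<noteq> y"
    then consider "v = x" | "v = z" using vars by blast
    then show "\<exists>h\<in>G. \<forall>w. w \<noteq> v \<longrightarrow>
        Poly_Mapping.lookup h w \<le> Poly_Mapping.lookup (g - Poly_Mapping.single y 1) w"
    proof cases
      case 1
      have "\<forall>w. w \<noteq> x \<longrightarrow>
          Poly_Mapping.lookup g' w \<le> Poly_Mapping.lookup (g - Poly_Mapping.single y 1) w"
        unfolding all_vars
        using g'(3) assms(2-4) not_in_keys_iff_lookup_eq_zero[of z g'] not_in_keys_iff_lookup_eq_zero[of z g]
        by (simp add: g(2,3) g'(2) lookup_minus lookup_single)
      then show ?thesis using 1 g'(1) by blast
    next
      case 2
      have "\<forall>w. w \<noteq> z \<longrightarrow>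
          Poly_Mapping.lookup h w \<le> Poly_Mapping.lookup (g - Poly_Mapping.single y 1) w"
        unfolding all_vars using h(3) assms(2-4) not_in_keys_iff_lookup_eq_zero[of x h]
        by (simp add: g(2,3) h(2) lookup_minus lookup_single)
      then show ?thesis using 2 h(1) by blast
    qed
  qed
qed

lemma socle_witness_generatorE:
  assumes "socle_witness G u"
  obtains h where "h \<in> G" "Poly_Mapping.lookup h v = Poly_Mapping.lookup u v + 1"
    "\<And>w. w \<noteq> v \<Longrightarrow> Poly_Mapping.lookup h w \<le> Poly_Mapping.lookup u w"
proof -
  obtain h where h: "h \<in> G" "mdvd h (u + Poly_Mapping.single v 1)"
    using assms unfolding socle_witness_def gens_dvd_def by blast
  have other: "Poly_Mapping.lookup h w \<le> Poly_Mapping.lookup u w" if "w \<noteq> v" for w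
    using h(2) that unfolding mdvd_def by (metis add_0_right lookup_add lookup_single_not_eq)
  have "Poly_Mapping.lookup h v \<le> Poly_Mapping.lookup u v + 1"
    using h(2) unfolding mdvd_def by (metis lookup_add lookup_single_eq)
  moreover have "\<not> Poly_Mapping.lookup h v \<le> Poly_Mapping.lookup u v"
  proof
    assume "Poly_Mapping.lookup h v \<le> Poly_Mapping.lookup u v"
    then have "mdvd h u" using other unfolding mdvd_def by metis
    then show False using h(1) assms unfolding socle_witness_def gens_dvd_def by blast
  qed
  ultimately show ?thesis using that h(1) other by simp
qed

text \<open>The \<open>j\<close>-ray of the witness enters the ideal through a generator containing \<open>x\<^sub>j\<close>,
  whose \<open>j\<close>-exponent is at most that of \<open>hh\<close>.\<close>
lemma socle_witness_lookup_less:
  assumes "i \<noteq> j" "j \<noteq> k" and cycle: "edges G = {{i, j}, {j, k}, {i, k}}" and "finite G"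
    and hh: "\<And>e. e \<in> G \<Longrightarrow> Poly_Mapping.keys e = {j, k} \<Longrightarrow> e = hh"
    "mu G j i \<le> Poly_Mapping.lookup hh j"
    and u: "socle_witness G u"
  shows "Poly_Mapping.lookup u j < Poly_Mapping.lookup hh j"
proof -
  obtain h where h: "h \<in> G" "Poly_Mapping.lookup h j = Poly_Mapping.lookup u j + 1"
    using socle_witness_generatorE[OF u] by blast
  have "Poly_Mapping.keys h \<in> edges G" using h(1) unfolding edges_def by (rule imageI)
  then have "Poly_Mapping.keys h \<in> {{i, j}, {j, k}, {i, k}}" by (simp only: cycle)
  moreover have "Poly_Mapping.keys h \<noteq> {i, k}"
    using h(2) assms(1,2) by (auto simp: in_keys_iff)
  ultimately consider "Poly_Mapping.keys h = {i, j}" | "Poly_Mapping.keys h = {j, k}" by auto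
  then show ?thesis
  proof cases
    case 1
    then have "Poly_Mapping.keys h = {j, i}" by (simp add: insert_commute)
    then have "Poly_Mapping.lookup h j \<le> mu G j i" by (rule lookup_le_mu[OF assms(4) h(1)])
    then show ?thesis using h(2) hh(2) by linarith
  next
    case 2
    then show ?thesis using h(2) hh(1)[OF h(1)] by simp
  qed
qed

lemma max_ideal_in_Ass_if_two_multiple_edges:
  assumes vars: "(UNIV :: 'v set) = {i, j, k}" and dist: "i \<noteq> j" "j \<noteq> k" "i \<noteq> k"
    and mingens: "minimal_gens G" and "alpha G i j \<ge> 2" "alpha G j k \<ge> 2"
  shows "max_ideal UNIV \<in> Ass (monomial_ideal G :: ('v, 'k::field) mpoly set)"
proof -
  obtain g where g: "g \<in> G" "Poly_Mapping.keys g = {i, j}" "Poly_Mapping.lookup g j < mu G j i"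
    using alpha_ge_2E[OF mingens \<open>alpha G i j \<ge> 2\<close>] by metis
  have "alpha G k j \<ge> 2" using \<open>alpha G j k \<ge> 2\<close> alpha_commute by metis
  then obtain g' where g': "g' \<in> G" "Poly_Mapping.keys g' = {k, j}" "Poly_Mapping.lookup g' j < mu G j k"
    using alpha_ge_2E[OF mingens] by metis
  show ?thesis
  proof (cases "mu G j i \<le> mu G j k")
    case True
    have "(UNIV :: 'v set) = {k, j, i}" using vars by auto
    moreover have "Poly_Mapping.keys g = {j, i}" using g(2) by (simp add: insert_commute)
    ultimately show ?thesis
      using max_ideal_in_Ass_if_low_neighbour[of k j i G g] dist mingens \<open>alpha G k j \<ge> 2\<close> g(1,3) True
      by simp
  next
    case False
    have "Poly_Mapping.keys g' = {j, k}" using g'(2) by (simp add: insert_commute)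
    then show ?thesis
      using max_ideal_in_Ass_if_low_neighbour[of i j k G g'] vars dist mingens \<open>alpha G i j \<ge> 2\<close> g'(1,3) False
      by simp
  qed
qed

lemma max_ideal_notin_Ass_if_unique_generators_high:
  assumes dist: "i \<noteq> j" "j \<noteq> k" "i \<noteq> k"
    and cycle: "edges G = {{i, j}, {j, k}, {i, k}}" and "finite G"
    and f: "\<And>e. e \<in> G \<Longrightarrow> Poly_Mapping.keys e = {i, k} \<Longrightarrow> e = f"
      "mu G i j \<le> Poly_Mapping.lookup f i"
    and hh: "\<And>e. e \<in> G \<Longrightarrow> Poly_Mapping.keys e = {j, k} \<Longrightarrow> e = hh"
      "mu G j i \<le> Poly_Mapping.lookup hh j"
  shows "max_ideal UNIV \<notin> Ass (monomial_ideal G :: ('v, 'k::field) mpoly set)"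
proof
  assume "max_ideal UNIV \<in> Ass (monomial_ideal G :: ('v, 'k) mpoly set)"
  then obtain u where u: "socle_witness G u" unfolding max_ideal_in_Ass_iff ..
  have below_hh: "Poly_Mapping.lookup u j < Poly_Mapping.lookup hh j"
    by (rule socle_witness_lookup_less[OF dist(1,2) cycle \<open>finite G\<close> hh u])
  have "{{j, i}, {i, k}, {j, k}} = {{i, j}, {j, k}, {i, k}}" by (simp add: insert_commute)
  then have "edges G = {{j, i}, {i, k}, {j, k}}" using cycle by simp
  from socle_witness_lookup_less[OF dist(1)[symmetric] dist(3) this \<open>finite G\<close> f u]
  have below_f: "Poly_Mapping.lookup u i < Poly_Mapping.lookup f i" .
  obtain h where h: "h \<in> G" "Poly_Mapping.lookup h k = Poly_Mapping.lookup u k + 1"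
    "\<And>w. w \<noteq> k \<Longrightarrow> Poly_Mapping.lookup h w \<le> Poly_Mapping.lookup u w"
    using socle_witness_generatorE[OF u] by blast
  have "Poly_Mapping.keys h \<in> edges G" using h(1) unfolding edges_def by (rule imageI)
  then have "Poly_Mapping.keys h \<in> {{i, j}, {j, k}, {i, k}}" by (simp only: cycle)
  moreover have "Poly_Mapping.keys h \<noteq> {i, j}"
    using h(2) dist by (auto simp: in_keys_iff)
  ultimately consider "Poly_Mapping.keys h = {j, k}" | "Poly_Mapping.keys h = {i, k}" by auto
  then show False
  proof cases
    case 1
    then show False using hh(1)[OF h(1)] h(3)[of j] below_hh dist by simp
  next
    case 2
    then show False using f(1)[OF h(1)] h(3)[of i] below_f dist by simp
  qed
qed

lemma max_ideal_notin_Ass_iff: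
  assumes vars: "(UNIV :: 'v set) = {i, j, k}" and dist: "i \<noteq> j" "j \<noteq> k" "i \<noteq> k"
    and mingens: "minimal_gens G" and cycle: "edges G = {{i, j}, {j, k}, {i, k}}"
    and "alpha G i k = 1" "alpha G j k = 1" "alpha G i j \<ge> 2"
  shows "max_ideal UNIV \<notin> Ass (monomial_ideal G :: ('v, 'k::field) mpoly set)
    \<longleftrightarrow> mu G i j \<le> w1 G i k \<and> mu G j i \<le> w1 G j k"
proof -
  obtain f where f: "f \<in> G" "Poly_Mapping.keys f = {i, k}"
    "\<And>e. e \<in> G \<Longrightarrow> Poly_Mapping.keys e = {i, k} \<Longrightarrow> e = f" "w1 G i k = Poly_Mapping.lookup f i"
    using alpha_eq_1E[OF \<open>alpha G i k = 1\<close>] by blast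
  obtain hh where hh: "hh \<in> G" "Poly_Mapping.keys hh = {j, k}"
    "\<And>e. e \<in> G \<Longrightarrow> Poly_Mapping.keys e = {j, k} \<Longrightarrow> e = hh" "w1 G j k = Poly_Mapping.lookup hh j"
    using alpha_eq_1E[OF \<open>alpha G j k = 1\<close>] by blast
  have "alpha G j i \<ge> 2" using \<open>alpha G i j \<ge> 2\<close> alpha_commute by metis
  have vars': "(UNIV :: 'v set) = {j, i, k}" using vars by (simp add: insert_commute)
  have "finite G" using mingens unfolding minimal_gens_def by blast
  show ?thesis
  proof
    assume notin: "max_ideal UNIV \<notin> Ass (monomial_ideal G :: ('v, 'k) mpoly set)"
    have "mu G i j \<le> Poly_Mapping.lookup f i"
      using max_ideal_in_Ass_if_low_neighbour[OF vars' _ _ _ mingens \<open>alpha G j i \<ge> 2\<close> f(1,2)]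
        dist notin not_le by blast
    moreover have "mu G j i \<le> Poly_Mapping.lookup hh j"
      using max_ideal_in_Ass_if_low_neighbour[OF vars dist mingens \<open>alpha G i j \<ge> 2\<close> hh(1,2)]
        notin not_le by blast
    ultimately show "mu G i j \<le> w1 G i k \<and> mu G j i \<le> w1 G j k" using f(4) hh(4) by simp
  next
    assume "mu G i j \<le> w1 G i k \<and> mu G j i \<le> w1 G j k"
    then have "mu G i j \<le> Poly_Mapping.lookup f i" "mu G j i \<le> Poly_Mapping.lookup hh j"
      using f(4) hh(4) by simp_all
    then show "max_ideal UNIV \<notin> Ass (monomial_ideal G :: ('v, 'k) mpoly set)"
      by (intro max_ideal_notin_Ass_if_unique_generators_high[OF dist cycle \<open>finite G\<close> f(3) _ hh(3)])
  qed
qed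

theorem proposition4p8:
  fixes G :: "('v \<Rightarrow>\<^sub>0 nat) set" and i j k :: 'v
  assumes vars: "(UNIV :: 'v set) = {i, j, k}"
    and dist: "i \<noteq> j" "j \<noteq> k" "i \<noteq> k"
    and mingens: "minimal_gens G"
    and supp2: "support2 G"
    and cycle: "edges G = {{i, j}, {j, k}, {i, k}}"
  shows "(alpha G i j \<ge> 2 \<and> alpha G j k \<ge> 2 \<longrightarrow>
            max_ideal UNIV \<in> Ass (monomial_ideal G :: ('v, 'K::field) mpoly set))
       \<and> (alpha G i k = 1 \<and> alpha G j k = 1 \<and> alpha G i j \<ge> 2 \<longrightarrow>
            (max_ideal UNIV \<notin> Ass (monomial_ideal G :: ('v, 'K::field) mpoly set)
             \<longleftrightarrow> w1 G i k \<ge> mu G i j \<and> w1 G j k \<ge> mu G j i))"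
  using max_ideal_in_Ass_if_two_multiple_edges[OF vars dist mingens]
    max_ideal_notin_Ass_iff[OF vars dist mingens cycle]
  by blast

end
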